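(* Assume A2 and let $n\ge 1$. Then $$y_{10^{n-1}}<y_{010^{n-1}}<y_{10^n}\qquad\text{and}\qquad y_{01^n}<y_{101^{n-1}}<y_{01^{n-1}},$$ where $0^k$, $1^k$ denote $k$-fold repetitions of a letter and $0^0=1^0=\epsilon$ (so e.g. $y_{10^0}=y_1$).
   Context: Words are finite strings over $\{0,1\}$; $\epsilon$ is the empty word. Let $\mathcal I\subseteq\mathbb R$ be an interval and $\phi_0,\phi_1:\mathcal I\to\mathcal I$. For a word $w$ put $\phi_w:=\phi_{w_{|w|}}\circ\cdots\circ\phi_{w_1}$ (the first letter is applied first), $\phi_\epsilon=\mathrm{id}$. Assumption A2: for all $x<y$ in $\mathcal I$ and $k\in\{0,1\}$, $\phi_k(x)<\phi_k(y)$ and $\phi_k(y)-\phi_k(x)<y-x$; moreover $\phi_0,\phi_1$ have fixed points $y_0,y_1\in\mathcal I$ with $y_1<y_0$. Under A2, for every non-empty word $w$ the map $\phi_w$ has a unique fixed point in $\mathcal I$, denoted $y_w$. *)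

theory Defs
  imports "HOL-Analysis.Analysis"
begin

text \<open>Words over {0,1} are lists of booleans: False = letter 0, True = letter 1.
  The pair of maps (phi_0, phi_1) is a single function phi :: bool => real => real.\<close>

type_synonym word = "bool list"

text \<open>phi_w: the first letter is applied first.\<close>
definition phiw :: "(bool \<Rightarrow> real \<Rightarrow> real) \<Rightarrow> word \<Rightarrow> real \<Rightarrow> real" where
  "phiw phi w x = foldl (\<lambda>z b. phi b z) x w"

definition A2 :: "real set \<Rightarrow> (bool \<Rightarrow> real \<Rightarrow> real) \<Rightarrow> bool" where
  "A2 I phi \<longleftrightarrow>
     is_interval I \<and>
     (\<forall>k. \<forall>x\<in>I. phi k x \<in> I) \<and>
     (\<forall>k. \<forall>x\<in>I. \<forall>y\<in>I. x < y \<longrightarrow> phi k x < phi k y \<and> phi k y - phi k x < y - x) \<and>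
     (\<exists>y0\<in>I. \<exists>y1\<in>I. phi False y0 = y0 \<and> phi True y1 = y1 \<and> y1 < y0)"

text \<open>The (unique, under A2) fixed point of phi_w in I.\<close>
definition yw :: "real set \<Rightarrow> (bool \<Rightarrow> real \<Rightarrow> real) \<Rightarrow> word \<Rightarrow> real" where
  "yw I phi w = (THE y. y \<in> I \<and> phiw phi w y = y)"

end

theory Submission
  imports Defs
begin

text \<open>For a nonempty word w the map phi_w is an increasing strict contraction of I mapping
  [y_1, y_0] into itself, so y_w exists and x < y_w iff x < phi_w x. If w contains the letter 1,
  then y_w < y_0, hence y_w < phi_0 y_w; applying phi_w gives y_w < phi_0w y_w, i.e. y_w < y_0w.
  In the same way y_0w < phi_0 y_0w = y_w0, the equality because phi_0 conjugates phi_0w into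
  phi_w0. For w = 10^(n-1) this is the first chain; the second is the first one for the system
  reflected by x \<mapsto> -x, which exchanges the two letters.\<close>

lemma phiw_Nil [simp]: "phiw phi [] x = x"
  by (simp add: phiw_def)

lemma phiw_Cons [simp]: "phiw phi (b # w) x = phiw phi w (phi b x)"
  by (simp add: phiw_def)

lemma phiw_append: "phiw phi (u @ v) x = phiw phi v (phiw phi u x)"
  by (simp add: phiw_def)

definition mirror :: "(bool \<Rightarrow> real \<Rightarrow> real) \<Rightarrow> bool \<Rightarrow> real \<Rightarrow> real" where
  "mirror phi b x = - phi (\<not> b) (- x)"

lemma phiw_mirror: "phiw (mirror phi) (map Not w) (- x) = - phiw phi w x"
  by (induction w arbitrary: x) (simp_all add: mirror_def)

lemma contraction_fixed_point_side:
  fixes f :: "real \<Rightarrow> real"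
  assumes contr: "\<forall>x\<in>I. \<forall>y\<in>I. x < y \<longrightarrow> f y - f x < y - x"
    and p: "p \<in> I" "f p = p" and x: "x \<in> I"
  shows "x < p \<longleftrightarrow> x < f x" and "p < x \<longleftrightarrow> f x < x"
proof -
  have "x < f x" if "x < p" using contr p x that by fastforce
  moreover have "f x < x" if "p < x" using contr p x that by fastforce
  ultimately show "x < p \<longleftrightarrow> x < f x" and "p < x \<longleftrightarrow> f x < x"
    using p(2) by (cases x p rule: linorder_cases; auto)+
qed

context
  fixes I :: "real set" and phi :: "bool \<Rightarrow> real \<Rightarrow> real"
  assumes A: "A2 I phi"
begin

lemma phi_in: "x \<in> I \<Longrightarrow> phi k x \<in> I"
  using A by (simp add: A2_def)

lemma phi_mono_contract: "x \<in> I \<Longrightarrow> y \<in> I \<Longrightarrow> x < y \<Longrightarrow> phi k x < phi k y \<and> phi k y - phi k x < y - x"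
  using A by (simp add: A2_def)

lemma phi_contract_on: "\<forall>x\<in>I. \<forall>y\<in>I. x < y \<longrightarrow> phi k y - phi k x < y - x"
  using phi_mono_contract by blast

lemma phiw_in: "x \<in> I \<Longrightarrow> phiw phi w x \<in> I"
  by (induction w arbitrary: x) (simp_all add: phi_in)

lemma phiw_mono_nonexpanding:
  "x \<in> I \<Longrightarrow> y \<in> I \<Longrightarrow> x < y \<Longrightarrow> phiw phi w x < phiw phi w y \<and> phiw phi w y - phiw phi w x \<le> y - x"
proof (induction w arbitrary: x y)
  case (Cons b w)
  have "phi b x < phi b y" "phi b y - phi b x < y - x"
    using Cons.prems phi_mono_contract by blast+
  then show ?case
    using Cons phi_in Cons.IH[of "phi b x" "phi b y"] by fastforce
qed simp

lemma phiw_strict_mono: "x \<in> I \<Longrightarrow> y \<in> I \<Longrightarrow> x < y \<Longrightarrow> phiw phi w x < phiw phi w y"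
  using phiw_mono_nonexpanding by blast

lemma phiw_mono: "x \<in> I \<Longrightarrow> y \<in> I \<Longrightarrow> x \<le> y \<Longrightarrow> phiw phi w x \<le> phiw phi w y"
  using phiw_strict_mono[of x y w] by (cases "x = y") auto

lemma phiw_contract:
  assumes "w \<noteq> []" "x \<in> I" "y \<in> I" "x < y"
  shows "phiw phi w y - phiw phi w x < y - x"
proof -
  obtain b v where "w = b # v" using assms(1) by (cases w) auto
  then show ?thesis
    using phi_mono_contract[OF assms(2-4), of b] phi_in assms(2,3)
      phiw_mono_nonexpanding[of "phi b x" "phi b y" v] by fastforce
qed

lemma phiw_lipschitz: "1-lipschitz_on I (phiw phi w)"
proof (rule lipschitz_onI)
  fix x y assume "x \<in> I" "y \<in> I"
  then show "dist (phiw phi w x) (phiw phi w y) \<le> 1 * dist x y"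
    using phiw_mono_nonexpanding[of x y w] phiw_mono_nonexpanding[of y x w]
    by (cases x y rule: linorder_cases) (auto simp: dist_real_def)
qed simp

lemma phiw_le_fixed:
  assumes "z \<in> I" "\<forall>k. phi k z \<le> z"
  shows "phiw phi w z \<le> z"
proof (induction w)
  case (Cons b w)
  have "phiw phi w (phi b z) \<le> phiw phi w z"
    using phiw_mono[OF phi_in[OF assms(1)] assms(1)] assms(2) by blast
  with Cons.IH show ?case by simp
qed simp

lemma phiw_less_fixed:
  assumes "z \<in> I" "\<forall>k. phi k z \<le> z" "k \<in> set w" "phi k z < z"
  shows "phiw phi w z < z"
proof -
  obtain u v where w: "w = u @ k # v" using split_list[OF assms(3)] by blast
  have "phi k (phiw phi u z) \<le> phi k z"
    using phiw_mono[OF phiw_in[OF assms(1)] assms(1) phiw_le_fixed[OF assms(1,2)], of "[k]"] by simp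
  then have "phi k (phiw phi u z) < z" using assms(4) by simp
  then have "phiw phi v (phi k (phiw phi u z)) < phiw phi v z"
    using phiw_strict_mono[OF phi_in[OF phiw_in[OF assms(1)]] assms(1)] by blast
  also have "\<dots> \<le> z" using phiw_le_fixed[OF assms(1,2)] .
  finally show ?thesis by (simp add: w phiw_append)
qed

end

lemma A2_mirror:
  assumes "A2 I phi"
  shows "A2 (uminus ` I) (mirror phi)"
proof -
  obtain y0 y1 where "y0 \<in> I" "y1 \<in> I" "phi False y0 = y0" "phi True y1 = y1" "y1 < y0"
    using assms by (auto simp: A2_def)
  then have "\<exists>y0\<in>uminus ` I. \<exists>y1\<in>uminus ` I. mirror phi False y0 = y0 \<and> mirror phi True y1 = y1 \<and> y1 < y0"
    by (intro bexI[of _ "- y1"] bexI[of _ "- y0"]) (auto simp: mirror_def)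
  moreover have "mirror phi k x \<in> uminus ` I" if "x \<in> uminus ` I" for k x
    using that phi_in[OF assms] by (auto simp: mirror_def)
  moreover have "mirror phi k x < mirror phi k y \<and> mirror phi k y - mirror phi k x < y - x"
    if "x \<in> uminus ` I" "y \<in> uminus ` I" "x < y" for k x y
    using that phi_mono_contract[OF assms, of "- y" "- x" "\<not> k"] by (auto simp: mirror_def)
  ultimately show ?thesis
    using assms by (auto simp: A2_def)
qed

context
  fixes I :: "real set" and phi :: "bool \<Rightarrow> real \<Rightarrow> real"
  assumes A: "A2 I phi"
begin

lemma A2_fixed_points:
  obtains y0 y1 where "y0 \<in> I" "y1 \<in> I" "y1 < y0"
    "phi False y0 = y0" "phi True y0 < y0" "phi True y1 = y1" "y1 < phi False y1"
proof -
  obtain y0 y1 where y: "y0 \<in> I" "y1 \<in> I" "phi False y0 = y0" "phi True y1 = y1" "y1 < y0"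
    using A by (auto simp: A2_def)
  moreover have "phi True y0 < y0"
    using contraction_fixed_point_side(2)[OF phi_contract_on[OF A] y(2,4) y(1)] y(5) by blast
  moreover have "y1 < phi False y1"
    using contraction_fixed_point_side(1)[OF phi_contract_on[OF A] y(1,3) y(2)] y(5) by blast
  ultimately show ?thesis using that by blast
qed

lemma phiw_fixed_point_exists: "\<exists>p\<in>I. phiw phi w p = p"
proof -
  obtain y0 y1 where y: "y0 \<in> I" "y1 \<in> I" "y1 < y0"
    "phi False y0 = y0" "phi True y0 < y0" "phi True y1 = y1" "y1 < phi False y1"
    using A2_fixed_points .
  have upper: "phiw phi w y0 \<le> y0"
    using phiw_le_fixed[OF A y(1)] y(4,5) by (simp add: all_bool_eq)
  have "phiw (mirror phi) (map Not w) (- y1) \<le> - y1"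
    using phiw_le_fixed[OF A2_mirror[OF A], of "- y1"] y(2,6,7)
    by (simp add: all_bool_eq mirror_def)
  then have lower: "y1 \<le> phiw phi w y1"
    by (simp add: phiw_mirror)
  have "is_interval I" using A by (simp add: A2_def)
  then have sub: "{y1..y0} \<subseteq> I"
    by (auto intro: mem_is_interval_1_I[OF _ y(2) y(1)])
  have "continuous_on {y1..y0} (phiw phi w)"
    using lipschitz_on_continuous_on[OF phiw_lipschitz[OF A]] sub by (rule continuous_on_subset)
  then have "continuous_on {y1..y0} (\<lambda>x. x - phiw phi w x)"
    by (intro continuous_on_diff continuous_on_id)
  then obtain p where "y1 \<le> p" "p \<le> y0" "p - phiw phi w p = 0"
    using IVT'[of "\<lambda>x. x - phiw phi w x" y1 0 y0] upper lower y(3) by auto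
  with sub show ?thesis by (intro bexI[of _ p]) auto
qed

lemma phiw_fixed_point_unique:
  assumes "w \<noteq> []" "p \<in> I" "q \<in> I" "phiw phi w p = p" "phiw phi w q = q"
  shows "p = q"
  using phiw_contract[OF A assms(1,2,3)] phiw_contract[OF A assms(1,3,2)] assms(4,5)
  by (cases p q rule: linorder_cases) auto

lemma yw_fixed:
  assumes "w \<noteq> []"
  shows "yw I phi w \<in> I" and "phiw phi w (yw I phi w) = yw I phi w"
proof -
  have "\<exists>!y. y \<in> I \<and> phiw phi w y = y"
    using phiw_fixed_point_exists phiw_fixed_point_unique[OF assms] by blast
  from theI'[OF this] show "yw I phi w \<in> I" "phiw phi w (yw I phi w) = yw I phi w"
    by (simp_all add: yw_def)
qed

lemma yw_eqI: "w \<noteq> [] \<Longrightarrow> y \<in> I \<Longrightarrow> phiw phi w y = y \<Longrightarrow> yw I phi w = y"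
  using phiw_fixed_point_unique yw_fixed by blast

lemma yw_contraction_side:
  assumes "w \<noteq> []" "x \<in> I"
  shows less_yw_iff: "x < yw I phi w \<longleftrightarrow> x < phiw phi w x"
    and yw_less_iff: "yw I phi w < x \<longleftrightarrow> phiw phi w x < x"
proof -
  have "\<forall>x\<in>I. \<forall>y\<in>I. x < y \<longrightarrow> phiw phi w y - phiw phi w x < y - x"
    using phiw_contract[OF A assms(1)] by blast
  from contraction_fixed_point_side[OF this yw_fixed[OF assms(1)] assms(2)]
  show "x < yw I phi w \<longleftrightarrow> x < phiw phi w x" "yw I phi w < x \<longleftrightarrow> phiw phi w x < x" .
qed

lemma yw_rotate:
  assumes "u @ v \<noteq> []"
  shows "yw I phi (u @ v) = phiw phi v (yw I phi (v @ u))"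
proof (rule yw_eqI[OF assms])
  have "v @ u \<noteq> []" using assms by auto
  note z = yw_fixed[OF this]
  show "phiw phi v (yw I phi (v @ u)) \<in> I" using phiw_in[OF A z(1)] .
  show "phiw phi (u @ v) (phiw phi v (yw I phi (v @ u))) = phiw phi v (yw I phi (v @ u))"
    using z(2) by (simp add: phiw_append)
qed

lemma yw_less_yw_Cons:
  assumes "w \<noteq> []" "yw I phi w < phi k (yw I phi w)"
  shows "yw I phi w < yw I phi (k # w)"
proof -
  note y = yw_fixed[OF assms(1)]
  have "phiw phi w (yw I phi w) < phiw phi w (phi k (yw I phi w))"
    using phiw_strict_mono[OF A y(1) phi_in[OF A y(1)] assms(2)] .
  then show ?thesis
    using less_yw_iff[of "k # w" "yw I phi w"] y by simp
qed

lemma yw_less_fixed_point_zero: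
  assumes "True \<in> set w" "y0 \<in> I" "phi False y0 = y0" "phi True y0 < y0"
  shows "yw I phi w < y0"
proof -
  have "w \<noteq> []" using assms(1) by auto
  moreover have "phiw phi w y0 < y0"
    using phiw_less_fixed[OF A assms(2) _ assms(1,4)] assms(3,4) by (simp add: all_bool_eq)
  ultimately show ?thesis using yw_less_iff assms(2) by blast
qed

lemma yw_chain_zero:
  assumes "True \<in> set w"
  shows "yw I phi w < yw I phi (False # w) \<and> yw I phi (False # w) < yw I phi (w @ [False])"
proof -
  obtain y0 where y0: "y0 \<in> I" "phi False y0 = y0" "phi True y0 < y0"
    using A2_fixed_points by blast
  have left_of_y0: "v \<noteq> [] \<Longrightarrow> yw I phi v < phi False (yw I phi v)" if "True \<in> set v" for v
    using contraction_fixed_point_side(1)[OF phi_contract_on[OF A] y0(1,2) yw_fixed(1)]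
      yw_less_fixed_point_zero[OF that y0] by blast
  have "w \<noteq> []" using assms by auto
  then have "yw I phi w < yw I phi (False # w)"
    using yw_less_yw_Cons left_of_y0[OF assms] by blast
  moreover have "yw I phi (w @ [False]) = phi False (yw I phi (False # w))"
    using yw_rotate[of w "[False]"] by simp
  ultimately show ?thesis
    using left_of_y0[of "False # w"] assms by simp
qed

end

lemma yw_mirror:
  assumes "A2 I phi" "w \<noteq> []"
  shows "yw (uminus ` I) (mirror phi) (map Not w) = - yw I phi w"
  using yw_eqI[OF A2_mirror[OF assms(1)]] yw_fixed[OF assms] phiw_mirror assms(2) by simp

lemma yw_chain_one:
  assumes "A2 I phi" "False \<in> set w"
  shows "yw I phi (w @ [True]) < yw I phi (True # w) \<and> yw I phi (True # w) < yw I phi w"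
proof -
  have "True \<in> set (map Not w)" "w \<noteq> []" using assms(2) by auto
  then show ?thesis
    using yw_chain_zero[OF A2_mirror[OF assms(1)], of "map Not w"]
      yw_mirror[OF assms(1), of w] yw_mirror[OF assms(1), of "True # w"]
      yw_mirror[OF assms(1), of "w @ [True]"] by simp
qed

theorem mainTheorem5:
  fixes I :: "real set" and phi :: "bool \<Rightarrow> real \<Rightarrow> real" and n :: nat
  assumes "A2 I phi" and "n \<ge> 1"
  shows "yw I phi ([True] @ replicate (n - 1) False)
           < yw I phi ([False, True] @ replicate (n - 1) False)
         \<and> yw I phi ([False, True] @ replicate (n - 1) False)
           < yw I phi ([True] @ replicate n False)
         \<and> yw I phi ([False] @ replicate n True)
           < yw I phi ([True, False] @ replicate (n - 1) True)
         \<and> yw I phi ([True, False] @ replicate (n - 1) True)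
           < yw I phi ([False] @ replicate (n - 1) True)"
proof -
  obtain m where n: "n = Suc m" using assms(2) by (cases n) auto
  have words:
    "[True] @ replicate (n - 1) False = True # replicate m False"
    "[False, True] @ replicate (n - 1) False = False # True # replicate m False"
    "[True] @ replicate n False = (True # replicate m False) @ [False]"
    "[False] @ replicate n True = (False # replicate m True) @ [True]"
    "[True, False] @ replicate (n - 1) True = True # False # replicate m True"
    "[False] @ replicate (n - 1) True = False # replicate m True"
    by (simp_all add: n replicate_append_same)
  show ?thesis
    unfolding words
    using yw_chain_zero[OF assms(1), of "True # replicate m False"]
      yw_chain_one[OF assms(1), of "False # replicate m True"] by simp
qed

end
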